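(* Let $\mathcal{F}$ be a scaling-closed set of length spaces or $\mathbb{R}_{>0}$-weighted graphs. 1. If $f,g:\mathbb{N}\times\mathbb{R}\to\mathbb{R}$ are functions such that every member of $\mathcal{F}$ has the weak coarse Menger property with witness $(f(k,r),g(k,r))$, then every length space in $\mathcal{F}$ has the weak coarse Menger property with witness $(f(k,1),g(k,1)\cdot r)$. 2. If $f,g:\mathbb{N}\times\mathbb{R}\to\mathbb{R}$ are functions such that every member of $\mathcal{F}$ has the weak coarse Gallai property with witness $(f(k,r),g(k,r))$, then every length space in $\mathcal{F}$ has the weak coarse Gallai property with witness $(f(k,1),g(k,1)\cdot r)$. 3. If $f,g:\mathbb{N}\times\mathbb{R}_{>0}\times\mathbb{R}_{\ge0}\to\mathbb{R}$ are functions such that every member of $\mathcal{F}$ has the remote weak coarse Menger property with witness $(f(k,r,\ell),g(k,r,\ell))$, then every length space in $\mathcal{F}$ has the remote weak coarse Menger property with witness $(f(k,1,\frac{\ell}{r}),\,g(k,1,\frac{\ell}{r})\cdot r)$.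
   Context: A set $\mathcal{F}$ of metric spaces is scaling-closed if $(X,r\cdot d_X)\in\mathcal{F}$ for every $(X,d_X)\in\mathcal{F}$ and real $r>0$. A length space is a metric space in which any two points are joined by paths (rectifiable curves) of length arbitrarily close to their distance. An $\mathbb{R}_{>0}$-weighted graph is a graph with positive edge weights, viewed as the metric space on its vertices with distance the infimum total weight of a path; its paths are graph paths. A set is $(\alpha,\beta)$-centered if it lies in a union of at most $\alpha$ balls of radius at most $\beta$; distance between paths is the infimum of distances between their points. Paths from $A$ to $B$ start in $A$ and end in $B$; an $(\ell,A,B)$-path is a path from $a\in A$ to $b\in B$ with $d(a,b)\ge\ell$; an $A$-path joins two distinct points of $A$. A space has the weak coarse Menger property with witness $(f,g)$ if for all $k\in\mathbb{N}$, $r>0$, subsets $A,B$, either there are $k$ paths from $A$ to $B$ pairwise at distance at least $r$, or some $(f(k,r),g(k,r))$-centered set meets every path from $A$ to $B$; the weak coarse Gallai property with witness $(f,g)$ is the same with $A$-paths; the remote weak coarse Menger property with witness $(f,g)$ means for all $k$, $r>0$, $\ell\ge0$, $A,B$, either there are $k$ $(\ell,A,B)$-paths pairwise at distance at least $r$ or some $(f(k,r,\ell),g(k,r,\ell))$-centered set meets every $(\ell,A,B)$-path. *)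

theory Defs
  imports "HOL-Analysis.Analysis"
begin

definition partition_sums :: "('a \<Rightarrow> 'a \<Rightarrow> real) \<Rightarrow> (real \<Rightarrow> 'a) \<Rightarrow> real set" where
  "partition_sums d \<gamma> = {(\<Sum>i<n. d (\<gamma> (t i)) (\<gamma> (t (Suc i)))) | n t.
      t 0 = 0 \<and> t n = 1 \<and> (\<forall>i<n. t i \<le> t (Suc i))}"

definition curve_length :: "('a \<Rightarrow> 'a \<Rightarrow> real) \<Rightarrow> (real \<Rightarrow> 'a) \<Rightarrow> real" where
  "curve_length d \<gamma> = Sup (partition_sums d \<gamma>)"

definition rect_curve :: "'a set \<Rightarrow> ('a \<Rightarrow> 'a \<Rightarrow> real) \<Rightarrow> (real \<Rightarrow> 'a) \<Rightarrow> bool" where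
  "rect_curve X d \<gamma> \<longleftrightarrow>
     continuous_map (top_of_set {0..1}) (Metric_space.mtopology X d) \<gamma> \<and>
     bdd_above (partition_sums d \<gamma>)"

definition length_space :: "'a set \<Rightarrow> ('a \<Rightarrow> 'a \<Rightarrow> real) \<Rightarrow> bool" where
  "length_space X d \<longleftrightarrow> Metric_space X d \<and>
     (\<forall>x\<in>X. \<forall>y\<in>X. \<forall>\<epsilon>>0. \<exists>\<gamma>. rect_curve X d \<gamma> \<and> \<gamma> 0 = x \<and> \<gamma> 1 = y \<and>
        curve_length d \<gamma> \<le> d x y + \<epsilon>)"

definition gpath :: "'a set \<Rightarrow> 'a set set \<Rightarrow> 'a list \<Rightarrow> bool" where
  "gpath V E xs \<longleftrightarrow> xs \<noteq> [] \<and> distinct xs \<and> set xs \<subseteq> V \<and>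
     (\<forall>i. Suc i < length xs \<longrightarrow> {xs ! i, xs ! Suc i} \<in> E)"

definition path_weight :: "('a set \<Rightarrow> real) \<Rightarrow> 'a list \<Rightarrow> real" where
  "path_weight w xs = (\<Sum>i<length xs - 1. w {xs ! i, xs ! Suc i})"

definition gdist :: "'a set \<Rightarrow> 'a set set \<Rightarrow> ('a set \<Rightarrow> real) \<Rightarrow> 'a \<Rightarrow> 'a \<Rightarrow> real" where
  "gdist V E w x y = Inf {path_weight w xs | xs. gpath V E xs \<and> hd xs = x \<and> last xs = y}"

definition weighted_graph :: "'a set \<Rightarrow> 'a set set \<Rightarrow> ('a set \<Rightarrow> real) \<Rightarrow> bool" where
  "weighted_graph V E w \<longleftrightarrow>
     E \<subseteq> {{a, b} | a b. a \<in> V \<and> b \<in> V \<and> a \<noteq> b} \<and>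
     (\<forall>e\<in>E. w e > 0) \<and>
     (\<forall>x\<in>V. \<forall>y\<in>V. \<exists>xs. gpath V E xs \<and> hd xs = x \<and> last xs = y) \<and>
     Metric_space V (gdist V E w)"

datatype 'a space =
    LenSp "'a set" "'a \<Rightarrow> 'a \<Rightarrow> real"
  | WGraph "'a set" "'a set set" "'a set \<Rightarrow> real"

fun valid_space :: "'a space \<Rightarrow> bool" where
  "valid_space (LenSp X d) = length_space X d"
| "valid_space (WGraph V E w) = weighted_graph V E w"

fun spc :: "'a space \<Rightarrow> 'a set" where
  "spc (LenSp X d) = X"
| "spc (WGraph V E w) = V"

fun sdist :: "'a space \<Rightarrow> 'a \<Rightarrow> 'a \<Rightarrow> real" where
  "sdist (LenSp X d) = d"
| "sdist (WGraph V E w) = gdist V E w"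

text \<open>Paths, recorded as (start point, end point, set of points on the path).\<close>
fun spaths :: "'a space \<Rightarrow> ('a \<times> 'a \<times> 'a set) set" where
  "spaths (LenSp X d) = {(\<gamma> 0, \<gamma> 1, \<gamma> ` {0..1}) | \<gamma>. rect_curve X d \<gamma>}"
| "spaths (WGraph V E w) = {(hd xs, last xs, set xs) | xs. gpath V E xs}"

fun scale :: "real \<Rightarrow> 'a space \<Rightarrow> 'a space" where
  "scale r (LenSp X d) = LenSp X (\<lambda>x y. r * d x y)"
| "scale r (WGraph V E w) = WGraph V E (\<lambda>e. r * w e)"

definition scaling_closed :: "'a space set \<Rightarrow> bool" where
  "scaling_closed F \<longleftrightarrow> (\<forall>M\<in>F. \<forall>r>0. scale r M \<in> F)"

definition centered :: "'a space \<Rightarrow> real \<Rightarrow> real \<Rightarrow> 'a set \<Rightarrow> bool" where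
  "centered M \<alpha> \<beta> S \<longleftrightarrow> (\<exists>C \<rho>. finite C \<and> C \<subseteq> spc M \<and> real (card C) \<le> \<alpha> \<and>
      (\<forall>c\<in>C. \<rho> c \<le> \<beta>) \<and> S \<subseteq> (\<Union>c\<in>C. {y \<in> spc M. sdist M c y \<le> \<rho> c}))"

definition path_dist :: "'a space \<Rightarrow> 'a set \<Rightarrow> 'a set \<Rightarrow> real" where
  "path_dist M P Q = Inf {sdist M x y | x y. x \<in> P \<and> y \<in> Q}"

definition far_paths :: "'a space \<Rightarrow> ('a \<times> 'a \<times> 'a set \<Rightarrow> bool) \<Rightarrow> nat \<Rightarrow> real \<Rightarrow> bool" where
  "far_paths M Q k r \<longleftrightarrow> (\<exists>P :: nat \<Rightarrow> 'a \<times> 'a \<times> 'a set.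
      (\<forall>i<k. P i \<in> spaths M \<and> Q (P i)) \<and>
      (\<forall>i<k. \<forall>j<k. i \<noteq> j \<longrightarrow> path_dist M (snd (snd (P i))) (snd (snd (P j))) \<ge> r))"

definition hitting_set :: "'a space \<Rightarrow> ('a \<times> 'a \<times> 'a set \<Rightarrow> bool) \<Rightarrow> real \<Rightarrow> real \<Rightarrow> bool" where
  "hitting_set M Q \<alpha> \<beta> \<longleftrightarrow> (\<exists>S \<subseteq> spc M. centered M \<alpha> \<beta> S \<and>
      (\<forall>p\<in>spaths M. Q p \<longrightarrow> S \<inter> snd (snd p) \<noteq> {}))"

definition path_from_to :: "'a set \<Rightarrow> 'a set \<Rightarrow> 'a \<times> 'a \<times> 'a set \<Rightarrow> bool" where
  "path_from_to A B p \<longleftrightarrow> fst p \<in> A \<and> fst (snd p) \<in> B"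

definition A_path :: "'a set \<Rightarrow> 'a \<times> 'a \<times> 'a set \<Rightarrow> bool" where
  "A_path A p \<longleftrightarrow> fst p \<in> A \<and> fst (snd p) \<in> A \<and> fst p \<noteq> fst (snd p)"

definition remote_path :: "'a space \<Rightarrow> real \<Rightarrow> 'a set \<Rightarrow> 'a set \<Rightarrow> 'a \<times> 'a \<times> 'a set \<Rightarrow> bool" where
  "remote_path M l A B p \<longleftrightarrow> fst p \<in> A \<and> fst (snd p) \<in> B \<and> sdist M (fst p) (fst (snd p)) \<ge> l"

definition weak_coarse_menger :: "'a space \<Rightarrow> (nat \<Rightarrow> real \<Rightarrow> real) \<Rightarrow> (nat \<Rightarrow> real \<Rightarrow> real) \<Rightarrow> bool" where
  "weak_coarse_menger M f g \<longleftrightarrow> (\<forall>k r A B. r > 0 \<longrightarrow> A \<subseteq> spc M \<longrightarrow> B \<subseteq> spc M \<longrightarrow>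
      far_paths M (path_from_to A B) k r \<or> hitting_set M (path_from_to A B) (f k r) (g k r))"

definition weak_coarse_gallai :: "'a space \<Rightarrow> (nat \<Rightarrow> real \<Rightarrow> real) \<Rightarrow> (nat \<Rightarrow> real \<Rightarrow> real) \<Rightarrow> bool" where
  "weak_coarse_gallai M f g \<longleftrightarrow> (\<forall>k r A. r > 0 \<longrightarrow> A \<subseteq> spc M \<longrightarrow>
      far_paths M (A_path A) k r \<or> hitting_set M (A_path A) (f k r) (g k r))"

definition remote_weak_coarse_menger :: "'a space \<Rightarrow> (nat \<Rightarrow> real \<Rightarrow> real \<Rightarrow> real) \<Rightarrow> (nat \<Rightarrow> real \<Rightarrow> real \<Rightarrow> real) \<Rightarrow> bool" where
  "remote_weak_coarse_menger M f g \<longleftrightarrow> (\<forall>k r l A B. r > 0 \<longrightarrow> l \<ge> 0 \<longrightarrow> A \<subseteq> spc M \<longrightarrow> B \<subseteq> spc M \<longrightarrow>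
      far_paths M (remote_path M l A B) k r \<or> hitting_set M (remote_path M l A B) (f k r l) (g k r l))"

end

theory Submission
  imports Defs
begin

text \<open>Multiplying the metric of a length space by c > 0 changes neither its topology nor
  which curves are rectifiable, so the space keeps the same paths, while all distances and
  ball radii are multiplied by c. Hence k paths pairwise at distance 1 in (X, d / r) are
  pairwise at distance r in (X, d), and a set covered by balls of radius g(k, 1) in (X, d / r)
  is covered by balls of radius g(k, 1) r in (X, d). Since (X, d / r) belongs to the
  scaling-closed family, the hypothesis applied to it at scale 1 yields the claimed witnesses;
  in the remote version the threshold l for (X, d) becomes l / r for (X, d / r).\<close>

lemma Metric_space_scale:
  assumes "Metric_space X d" "c > (0::real)"
  shows "Metric_space X (\<lambda>x y. c * d x y)"
  using assms unfolding Metric_space_def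
  by (auto simp: mult.commute) (metis distrib_left mult_left_mono less_imp_le)

lemma mtopology_scale:
  assumes "Metric_space X d" "c > (0::real)"
  shows "Metric_space.mtopology X (\<lambda>x y. c * d x y) = Metric_space.mtopology X d"
proof -
  interpret d: Metric_space X d by fact
  interpret cd: Metric_space X "\<lambda>x y. c * d x y" by (rule Metric_space_scale[OF assms])
  have mball_eq: "cd.mball x e = d.mball x (e / c)" for x e
    using assms(2) by (auto simp: d.mball_def cd.mball_def field_simps mult.commute)
  have radius_rescale:
    "(\<exists>e>0. d.mball x (e / c) \<subseteq> U) \<longleftrightarrow> (\<exists>e>0. d.mball x e \<subseteq> U)" for x U
  proof
    assume "\<exists>e>0. d.mball x (e / c) \<subseteq> U"
    then show "\<exists>e>0. d.mball x e \<subseteq> U" using assms(2) by (auto intro: divide_pos_pos)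
  next
    assume "\<exists>e>0. d.mball x e \<subseteq> U"
    then obtain e where "e > 0" "d.mball x e \<subseteq> U" by blast
    then show "\<exists>e>0. d.mball x (e / c) \<subseteq> U" using assms(2) by (intro exI[of _ "e * c"]) auto
  qed
  show ?thesis
    by (simp add: topology_eq d.openin_mtopology cd.openin_mtopology mball_eq radius_rescale)
qed

lemma partition_sums_scale:
  "partition_sums (\<lambda>x y. c * d x y) \<gamma> = (*) c ` partition_sums d \<gamma>"
  unfolding partition_sums_def sum_distrib_left[symmetric] by blast

lemma bdd_above_image_mult_iff:
  assumes "c > (0::real)"
  shows "bdd_above ((*) c ` S) \<longleftrightarrow> bdd_above S"
proof
  assume "bdd_above ((*) c ` S)"
  then obtain b where "\<forall>s\<in>S. c * s \<le> b" by (auto simp: bdd_above_def)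
  then have "\<forall>s\<in>S. s \<le> b / c" using assms by (auto simp: field_simps mult.commute)
  then show "bdd_above S" by (auto simp: bdd_above_def)
next
  assume "bdd_above S"
  then obtain b where "\<forall>s\<in>S. s \<le> b" by (auto simp: bdd_above_def)
  then have "\<forall>s\<in>S. c * s \<le> c * b" using assms by auto
  then show "bdd_above ((*) c ` S)" by (auto simp: bdd_above_def)
qed

lemma rect_curve_scale:
  assumes "Metric_space X d" "c > (0::real)"
  shows "rect_curve X (\<lambda>x y. c * d x y) = rect_curve X d"
  unfolding rect_curve_def mtopology_scale[OF assms] partition_sums_scale
    bdd_above_image_mult_iff[OF assms(2)] ..

lemma spaths_LenSp_scale:
  assumes "Metric_space X d" "c > (0::real)"
  shows "spaths (LenSp X (\<lambda>x y. c * d x y)) = spaths (LenSp X d)"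
  using rect_curve_scale[OF assms] by simp

lemma spaths_LenSp_points:
  assumes "Metric_space X d" "p \<in> spaths (LenSp X d)"
  shows "snd (snd p) \<noteq> {}" "snd (snd p) \<subseteq> X"
  using assms
  by (auto simp: rect_curve_def continuous_map_def Metric_space.topspace_mtopology)

lemma le_path_dist_LenSp_iff:
  assumes "Metric_space X d" "P \<noteq> {}" "Q \<noteq> {}" "P \<subseteq> X" "Q \<subseteq> X"
  shows "t \<le> path_dist (LenSp X d) P Q \<longleftrightarrow> (\<forall>x\<in>P. \<forall>y\<in>Q. t \<le> d x y)"
proof -
  have "{d x y | x y. x \<in> P \<and> y \<in> Q} \<noteq> {}" using assms(2,3) by auto
  moreover have "bdd_below {d x y | x y. x \<in> P \<and> y \<in> Q}"
    using assms(1,4,5) by (auto simp: bdd_below_def Metric_space_def intro!: exI[of _ 0])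
  ultimately show ?thesis
    unfolding path_dist_def sdist.simps by (subst le_cInf_iff) blast+
qed

lemma far_paths_LenSp_scale:
  assumes "Metric_space X d" "c > (0::real)"
    and "far_paths (LenSp X (\<lambda>x y. c * d x y)) Q k t"
  shows "far_paths (LenSp X d) Q k (t / c)"
proof -
  have cd: "Metric_space X (\<lambda>x y. c * d x y)" by (rule Metric_space_scale[OF assms(1,2)])
  obtain P where P: "\<forall>i<k. P i \<in> spaths (LenSp X d) \<and> Q (P i)"
    "\<forall>i<k. \<forall>j<k. i \<noteq> j \<longrightarrow>
       t \<le> path_dist (LenSp X (\<lambda>x y. c * d x y)) (snd (snd (P i))) (snd (snd (P j)))"
    using assms(3) unfolding far_paths_def spaths_LenSp_scale[OF assms(1,2)] by blast
  show ?thesis unfolding far_paths_def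
  proof (intro exI[of _ P] conjI allI impI)
    fix i j assume ij: "i < k" "j < k" "i \<noteq> j"
    have Pi: "snd (snd (P i)) \<noteq> {}" "snd (snd (P i)) \<subseteq> X"
      using spaths_LenSp_points[OF assms(1)] P(1) ij(1) by blast+
    have Pj: "snd (snd (P j)) \<noteq> {}" "snd (snd (P j)) \<subseteq> X"
      using spaths_LenSp_points[OF assms(1)] P(1) ij(2) by blast+
    have "t \<le> path_dist (LenSp X (\<lambda>x y. c * d x y)) (snd (snd (P i))) (snd (snd (P j)))"
      using P(2) ij by blast
    then have "\<forall>x\<in>snd (snd (P i)). \<forall>y\<in>snd (snd (P j)). t \<le> c * d x y"
      unfolding le_path_dist_LenSp_iff[OF cd Pi(1) Pj(1) Pi(2) Pj(2)] .
    then have "\<forall>x\<in>snd (snd (P i)). \<forall>y\<in>snd (snd (P j)). t / c \<le> d x y"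
      using assms(2) by (auto simp: divide_le_eq mult.commute)
    then show "t / c \<le> path_dist (LenSp X d) (snd (snd (P i))) (snd (snd (P j)))"
      unfolding le_path_dist_LenSp_iff[OF assms(1) Pi(1) Pj(1) Pi(2) Pj(2)] .
  qed (use P in auto)
qed

lemma hitting_set_LenSp_scale:
  assumes "Metric_space X d" "c > (0::real)"
    and "hitting_set (LenSp X (\<lambda>x y. c * d x y)) Q \<alpha> \<beta>"
  shows "hitting_set (LenSp X d) Q \<alpha> (\<beta> / c)"
proof -
  obtain S C \<rho> where S: "S \<subseteq> X" "finite C" "C \<subseteq> X" "real (card C) \<le> \<alpha>"
    "\<forall>z\<in>C. \<rho> z \<le> \<beta>" "S \<subseteq> (\<Union>z\<in>C. {y \<in> X. c * d z y \<le> \<rho> z})"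
    "\<forall>p\<in>spaths (LenSp X d). Q p \<longrightarrow> S \<inter> snd (snd p) \<noteq> {}"
    using assms(3) unfolding hitting_set_def centered_def spaths_LenSp_scale[OF assms(1,2)]
    by auto
  have "(\<Union>z\<in>C. {y \<in> X. c * d z y \<le> \<rho> z}) = (\<Union>z\<in>C. {y \<in> X. d z y \<le> \<rho> z / c})"
    using assms(2) by (auto simp: le_divide_eq mult.commute)
  moreover have "\<forall>z\<in>C. \<rho> z / c \<le> \<beta> / c"
    using S(5) assms(2) by (auto intro: divide_right_mono)
  ultimately show ?thesis unfolding hitting_set_def centered_def
    using S by (intro exI[of _ S] conjI exI[of _ C] exI[of _ "\<lambda>z. \<rho> z / c"]) auto
qed

lemma remote_path_LenSp_scale:
  assumes "c > (0::real)"
  shows "remote_path (LenSp X (\<lambda>x y. c * d x y)) (c * l) A B = remote_path (LenSp X d) l A B"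
  using assms by (auto simp: remote_path_def fun_eq_iff)

lemma far_paths_or_hitting_set_unscale:
  assumes "Metric_space X d" "r > (0::real)"
    and "far_paths (LenSp X (\<lambda>x y. (1 / r) * d x y)) Q k 1 \<or>
         hitting_set (LenSp X (\<lambda>x y. (1 / r) * d x y)) Q \<alpha> \<beta>"
  shows "far_paths (LenSp X d) Q k r \<or> hitting_set (LenSp X d) Q \<alpha> (\<beta> * r)"
proof -
  have "1 / r > 0" using assms(2) by simp
  with assms(1,3) have "far_paths (LenSp X d) Q k (1 / (1 / r)) \<or>
      hitting_set (LenSp X d) Q \<alpha> (\<beta> / (1 / r))"
    using far_paths_LenSp_scale hitting_set_LenSp_scale by blast
  then show ?thesis by simp
qed

lemma weak_coarse_menger_from_rescalings:
  assumes "Metric_space X d" "\<forall>c>0. weak_coarse_menger (scale c (LenSp X d)) f g"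
  shows "weak_coarse_menger (LenSp X d) (\<lambda>k r. f k 1) (\<lambda>k r. g k 1 * r)"
  unfolding weak_coarse_menger_def
proof (intro allI impI)
  fix k r A B assume r: "(r::real) > 0" and "A \<subseteq> spc (LenSp X d)" "B \<subseteq> spc (LenSp X d)"
  with assms(2)[rule_format, of "1 / r"]
  have "far_paths (LenSp X (\<lambda>x y. (1 / r) * d x y)) (path_from_to A B) k 1 \<or>
      hitting_set (LenSp X (\<lambda>x y. (1 / r) * d x y)) (path_from_to A B) (f k 1) (g k 1)"
    unfolding weak_coarse_menger_def scale.simps spc.simps by auto
  then show "far_paths (LenSp X d) (path_from_to A B) k r \<or>
      hitting_set (LenSp X d) (path_from_to A B) (f k 1) (g k 1 * r)"
    by (rule far_paths_or_hitting_set_unscale[OF assms(1) r])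
qed

lemma weak_coarse_gallai_from_rescalings:
  assumes "Metric_space X d" "\<forall>c>0. weak_coarse_gallai (scale c (LenSp X d)) f g"
  shows "weak_coarse_gallai (LenSp X d) (\<lambda>k r. f k 1) (\<lambda>k r. g k 1 * r)"
  unfolding weak_coarse_gallai_def
proof (intro allI impI)
  fix k r A assume r: "(r::real) > 0" and "A \<subseteq> spc (LenSp X d)"
  with assms(2)[rule_format, of "1 / r"]
  have "far_paths (LenSp X (\<lambda>x y. (1 / r) * d x y)) (A_path A) k 1 \<or>
      hitting_set (LenSp X (\<lambda>x y. (1 / r) * d x y)) (A_path A) (f k 1) (g k 1)"
    unfolding weak_coarse_gallai_def scale.simps spc.simps by auto
  then show "far_paths (LenSp X d) (A_path A) k r \<or>
      hitting_set (LenSp X d) (A_path A) (f k 1) (g k 1 * r)"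
    by (rule far_paths_or_hitting_set_unscale[OF assms(1) r])
qed

lemma remote_weak_coarse_menger_from_rescalings:
  assumes "Metric_space X d" "\<forall>c>0. remote_weak_coarse_menger (scale c (LenSp X d)) f g"
  shows "remote_weak_coarse_menger (LenSp X d)
    (\<lambda>k r l. f k 1 (l / r)) (\<lambda>k r l. g k 1 (l / r) * r)"
  unfolding remote_weak_coarse_menger_def
proof (intro allI impI)
  fix k r l A B assume r: "(r::real) > 0" and l: "(l::real) \<ge> 0"
    and AB: "A \<subseteq> spc (LenSp X d)" "B \<subseteq> spc (LenSp X d)"
  have remote_eq: "remote_path (LenSp X (\<lambda>x y. (1 / r) * d x y)) ((1 / r) * l) A B =
      remote_path (LenSp X d) l A B"
    using r by (intro remote_path_LenSp_scale) simp
  have "far_paths (LenSp X (\<lambda>x y. (1 / r) * d x y)) (remote_path (LenSp X d) l A B) k 1 \<or>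
      hitting_set (LenSp X (\<lambda>x y. (1 / r) * d x y)) (remote_path (LenSp X d) l A B)
        (f k 1 (l / r)) (g k 1 (l / r))"
    using assms(2)[rule_format, of "1 / r"] r l AB
    unfolding remote_eq[symmetric] remote_weak_coarse_menger_def scale.simps spc.simps by auto
  then show "far_paths (LenSp X d) (remote_path (LenSp X d) l A B) k r \<or>
      hitting_set (LenSp X d) (remote_path (LenSp X d) l A B) (f k 1 (l / r)) (g k 1 (l / r) * r)"
    by (rule far_paths_or_hitting_set_unscale[OF assms(1) r])
qed

theorem lemma9p5:
  fixes F :: "'a space set"
    and f1 g1 f2 g2 :: "nat \<Rightarrow> real \<Rightarrow> real"
    and f3 g3 :: "nat \<Rightarrow> real \<Rightarrow> real \<Rightarrow> real"
  assumes "\<forall>M\<in>F. valid_space M"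
    and "scaling_closed F"
  shows "((\<forall>M\<in>F. weak_coarse_menger M f1 g1) \<longrightarrow>
           (\<forall>X d. LenSp X d \<in> F \<longrightarrow>
              weak_coarse_menger (LenSp X d) (\<lambda>k r. f1 k 1) (\<lambda>k r. g1 k 1 * r)))
       \<and> ((\<forall>M\<in>F. weak_coarse_gallai M f2 g2) \<longrightarrow>
           (\<forall>X d. LenSp X d \<in> F \<longrightarrow>
              weak_coarse_gallai (LenSp X d) (\<lambda>k r. f2 k 1) (\<lambda>k r. g2 k 1 * r)))
       \<and> ((\<forall>M\<in>F. remote_weak_coarse_menger M f3 g3) \<longrightarrow>
           (\<forall>X d. LenSp X d \<in> F \<longrightarrow>
              remote_weak_coarse_menger (LenSp X d) (\<lambda>k r l. f3 k 1 (l / r)) (\<lambda>k r l. g3 k 1 (l / r) * r)))"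
proof -
  have metric: "Metric_space X d" if "LenSp X d \<in> F" for X d
    using assms(1) that by (auto simp: length_space_def)
  have rescaled: "\<forall>c>0. scale c M \<in> F" if "M \<in> F" for M
    using assms(2) that unfolding scaling_closed_def by blast
  show ?thesis
  proof (intro conjI impI allI)
    fix X d assume "\<forall>M\<in>F. weak_coarse_menger M f1 g1" "LenSp X d \<in> F"
    then show "weak_coarse_menger (LenSp X d) (\<lambda>k r. f1 k 1) (\<lambda>k r. g1 k 1 * r)"
      using weak_coarse_menger_from_rescalings metric rescaled by blast
  next
    fix X d assume "\<forall>M\<in>F. weak_coarse_gallai M f2 g2" "LenSp X d \<in> F"
    then show "weak_coarse_gallai (LenSp X d) (\<lambda>k r. f2 k 1) (\<lambda>k r. g2 k 1 * r)"
      using weak_coarse_gallai_from_rescalings metric rescaled by blast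
  next
    fix X d assume "\<forall>M\<in>F. remote_weak_coarse_menger M f3 g3" "LenSp X d \<in> F"
    then show "remote_weak_coarse_menger (LenSp X d)
        (\<lambda>k r l. f3 k 1 (l / r)) (\<lambda>k r l. g3 k 1 (l / r) * r)"
      using remote_weak_coarse_menger_from_rescalings metric rescaled by blast
  qed
qed

end
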